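(* Let $\mathcal{F}$ be a fusion ring with structure constants $(N_{i,j}^k)$, index $1$ being the unit. Suppose indices $i_1,\dots,i_9$ satisfy $N_{i_4,i_1}^{i_6},\ N_{i_5,i_4}^{i_2},\ N_{i_5,i_6}^{i_3},\ N_{i_7,i_9}^{i_1},\ N_{i_2,i_7}^{i_8},\ N_{i_8,i_9}^{i_3}\neq0$ and $N_{i_2,i_1}^{i_3}=0$. Then $i_j\neq1$ for all $j\in\{4,\dots,9\}$.
   Context: A fusion ring is a ring which is a free $\mathbb{Z}$-module with finite basis $\{b_1,\dots,b_r\}$, $b_ib_j=\sum_kN_{i,j}^kb_k$, $N_{i,j}^k\in\mathbb{Z}_{\ge0}$, associative, unit $b_1$, duality $i\mapsto i^*$ with $N_{i,k}^1=N_{k,i}^1=\delta_{i^*,k}$, and Frobenius reciprocity $N_{i,j}^k=N_{i^*,k}^j=N_{k,j^*}^i$. *)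

theory Defs
  imports Main
begin

text \<open>A fusion ring of rank r: basis indices {1..r}, index 1 is the unit,
  structure constants N i j k (coefficient of b_k in b_i b_j), duality d.\<close>

definition fusion_ring :: "nat \<Rightarrow> (nat \<Rightarrow> nat \<Rightarrow> nat \<Rightarrow> nat) \<Rightarrow> (nat \<Rightarrow> nat) \<Rightarrow> bool" where
  "fusion_ring r N d \<longleftrightarrow>
     1 \<le> r
   \<and> (\<forall>i\<in>{1..r}. \<forall>j\<in>{1..r}. \<forall>k\<in>{1..r}. \<forall>l\<in>{1..r}.
        (\<Sum>m\<in>{1..r}. N i j m * N m k l) = (\<Sum>m\<in>{1..r}. N j k m * N i m l))
   \<and> (\<forall>i\<in>{1..r}. \<forall>j\<in>{1..r}. N 1 i j = (if i = j then 1 else 0) \<and> N i 1 j = (if i = j then 1 else 0))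
   \<and> (\<forall>i\<in>{1..r}. d i \<in> {1..r})
   \<and> (\<forall>i\<in>{1..r}. \<forall>k\<in>{1..r}. N i k 1 = (if d i = k then 1 else 0) \<and> N k i 1 = (if d i = k then 1 else 0))
   \<and> (\<forall>i\<in>{1..r}. \<forall>j\<in>{1..r}. \<forall>k\<in>{1..r}. N i j k = N (d i) k j \<and> N i j k = N k (d j) i)"

end

theory Submission
  imports Defs
begin

text \<open>If one of \<open>i4, \<dots>, i9\<close> were the unit, the unit axiom (for \<open>i6\<close> and \<open>i8\<close>: the
  duality axiom) would turn two of the nonvanishing structure constants into equalities
  of indices, and the third would become \<open>N i2 i1 i3\<close>, directly or after one application
  of Frobenius reciprocity.\<close>

context
  fixes r :: nat and N :: "nat \<Rightarrow> nat \<Rightarrow> nat \<Rightarrow> nat" and d :: "nat \<Rightarrow> nat"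
  assumes fr: "fusion_ring r N d"
begin

lemma fusion_ring_unit_left:
  assumes "i \<in> {1..r}" "j \<in> {1..r}" "N 1 i j \<noteq> 0"
  shows "j = i"
  using fr assms unfolding fusion_ring_def by (metis (full_types))

lemma fusion_ring_unit_right:
  assumes "i \<in> {1..r}" "j \<in> {1..r}" "N i 1 j \<noteq> 0"
  shows "j = i"
  using fr assms unfolding fusion_ring_def by (metis (full_types))

lemma fusion_ring_dual_left:
  assumes "i \<in> {1..r}" "k \<in> {1..r}" "N i k 1 \<noteq> 0"
  shows "k = d i"
  using fr assms unfolding fusion_ring_def by (metis (full_types))

lemma fusion_ring_dual_right:
  assumes "i \<in> {1..r}" "k \<in> {1..r}" "N k i 1 \<noteq> 0"
  shows "k = d i"
  using fr assms unfolding fusion_ring_def by (metis (full_types))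

lemma fusion_ring_frobenius_left:
  assumes "i \<in> {1..r}" "j \<in> {1..r}" "k \<in> {1..r}"
  shows "N i j k = N (d i) k j"
  using fr assms unfolding fusion_ring_def by blast

lemma fusion_ring_frobenius_right:
  assumes "i \<in> {1..r}" "j \<in> {1..r}" "k \<in> {1..r}"
  shows "N i j k = N k (d j) i"
  using fr assms unfolding fusion_ring_def by blast

end

theorem lemma7p18:
  fixes r :: nat and N :: "nat \<Rightarrow> nat \<Rightarrow> nat \<Rightarrow> nat" and d :: "nat \<Rightarrow> nat"
    and i1 i2 i3 i4 i5 i6 i7 i8 i9 :: nat
  assumes "fusion_ring r N d"
    and "i1 \<in> {1..r}" "i2 \<in> {1..r}" "i3 \<in> {1..r}" "i4 \<in> {1..r}" "i5 \<in> {1..r}"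
        "i6 \<in> {1..r}" "i7 \<in> {1..r}" "i8 \<in> {1..r}" "i9 \<in> {1..r}"
    and "N i4 i1 i6 \<noteq> 0" "N i5 i4 i2 \<noteq> 0" "N i5 i6 i3 \<noteq> 0"
        "N i7 i9 i1 \<noteq> 0" "N i2 i7 i8 \<noteq> 0" "N i8 i9 i3 \<noteq> 0"
    and "N i2 i1 i3 = 0"
  shows "\<forall>j\<in>{i4, i5, i6, i7, i8, i9}. j \<noteq> 1"
proof -
  note unit_left = fusion_ring_unit_left[OF assms(1)]
   and unit_right = fusion_ring_unit_right[OF assms(1)]
  have "i4 \<noteq> 1"
    using unit_left[of i1 i6] unit_right[of i5 i2] assms by auto
  moreover have "i5 \<noteq> 1"
    using unit_left[of i4 i2] unit_left[of i6 i3] assms by auto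
  moreover have "i7 \<noteq> 1"
    using unit_left[of i9 i1] unit_right[of i2 i8] assms by auto
  moreover have "i9 \<noteq> 1"
    using unit_right[of i7 i1] unit_right[of i8 i3] assms by auto
  moreover have "i6 \<noteq> 1"
  proof
    assume "i6 = 1"
    then have "i1 = d i4" "i3 = i5"
      using fusion_ring_dual_left[OF assms(1), of i4 i1] unit_right[of i5 i3] assms by auto
    then show False
      using fusion_ring_frobenius_right[OF assms(1), of i5 i4 i2] assms by simp
  qed
  moreover have "i8 \<noteq> 1"
  proof
    assume "i8 = 1"
    then have "i2 = d i7" "i3 = i9"
      using fusion_ring_dual_right[OF assms(1), of i7 i2] unit_left[of i9 i3] assms by auto
    then show False
      using fusion_ring_frobenius_left[OF assms(1), of i7 i9 i1] assms by simp
  qed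
  ultimately show ?thesis by blast
qed

end
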